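(* Let $\{X_t\}_{t\in\mathbb N^+}$ be a real-valued process adapted to a filtration $\{\mathcal F_t\}_{t\in\mathbb N}$ with $\mathcal F_0$ trivial, such that for all $t\in\mathbb N^+$, $\mathbb E[X_t\mid\mathcal F_{t-1}]=\mu$ and $\mathbb E[(X_t-\mu)^2\mid\mathcal F_{t-1}]\le1$. Let $\phi$ be a Catoni-type influence function. For $\Lambda>0$ and $\beta\in(0,1)$ let $$\mathrm{CI}^{\mathsf C}_t(\Lambda,\beta)=\left\{m\in\mathbb R:\ -\frac{t\Lambda^2}{2}-\log(2/\beta)\le\sum_{i=1}^t\phi(\Lambda(X_i-m))\le\frac{t\Lambda^2}{2}+\log(2/\beta)\right\}.$$ Let $\zeta=\sum_{m=1}^\infty m^{-1.4}$ and, for $j\in\mathbb N=\{0,1,2,\dots\}$, let $t_j=2^j$, $\alpha_j=\frac{\alpha/(j+1)^{1.4}}{\zeta}$ and $\Lambda_j=\sqrt{\log(2/\alpha_j)\,2^{1/2-j}}$. Define the stitched sets $\mathrm{CI}^{\mathsf{Cstch}}_t=\mathrm{CI}^{\mathsf C}_t(\Lambda_j,\alpha_j)$ for $t_j\le t<t_{j+1}$, and let $|\mathrm{CI}^{\mathsf{Cstch}}_t|$ denote its width (supremum minus infimum). Then there is a polynomial $q$ such that for every $\alpha\in(0,1)$ and every $t>q(\log(1/\alpha))$, $$\Pr\left[|\mathrm{CI}^{\mathsf{Cstch}}_t|\le6.8\sqrt{\frac{\log\log 2t+0.72\log(10.4/\alpha)}{t}}\right]\ge1-\frac{\alpha}{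\zeta}>1-\alpha/3.$$
   Context: A function $\phi:\mathbb R\to\mathbb R$ is a Catoni-type influence function if it is increasing and $-\log(1-x+x^2/2)\le\phi(x)\le\log(1+x+x^2/2)$ for all $x\in\mathbb R$. *)

theory Defs
  imports "HOL-Probability.Probability" "HOL-Computational_Algebra.Polynomial"
begin

definition catoni_type :: "(real \<Rightarrow> real) \<Rightarrow> bool" where
  "catoni_type \<phi> \<longleftrightarrow> mono \<phi> \<and>
     (\<forall>x. - ln (1 - x + x\<^sup>2 / 2) \<le> \<phi> x \<and> \<phi> x \<le> ln (1 + x + x\<^sup>2 / 2))"

definition CI_C :: "(nat \<Rightarrow> real) \<Rightarrow> (real \<Rightarrow> real) \<Rightarrow> nat \<Rightarrow> real \<Rightarrow> real \<Rightarrow> real set" where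
  "CI_C x \<phi> t \<Lambda> \<beta> = {m. - (real t * \<Lambda>\<^sup>2 / 2) - ln (2 / \<beta>) \<le> (\<Sum>i=1..t. \<phi> (\<Lambda> * (x i - m)))
                          \<and> (\<Sum>i=1..t. \<phi> (\<Lambda> * (x i - m))) \<le> real t * \<Lambda>\<^sup>2 / 2 + ln (2 / \<beta>)}"

definition zeta14 :: real where
  "zeta14 = (\<Sum>m. 1 / (real (Suc m)) powr 1.4)"

definition alpha_j :: "real \<Rightarrow> nat \<Rightarrow> real" where
  "alpha_j \<alpha> j = (\<alpha> / (real j + 1) powr 1.4) / zeta14"

definition Lambda_j :: "real \<Rightarrow> nat \<Rightarrow> real" where
  "Lambda_j \<alpha> j = sqrt (ln (2 / alpha_j \<alpha> j) * 2 powr (1/2 - real j))"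

text \<open>The unique j with 2^j \<le> t < 2^(j+1) (for t \<ge> 1).\<close>
definition stitch_index :: "nat \<Rightarrow> nat" where
  "stitch_index t = (THE j. 2 ^ j \<le> t \<and> t < 2 ^ (j + 1))"

definition CI_stitch :: "(nat \<Rightarrow> real) \<Rightarrow> (real \<Rightarrow> real) \<Rightarrow> real \<Rightarrow> nat \<Rightarrow> real set" where
  "CI_stitch x \<phi> \<alpha> t = CI_C x \<phi> t (Lambda_j \<alpha> (stitch_index t)) (alpha_j \<alpha> (stitch_index t))"

text \<open>Width (supremum minus infimum) in the extended reals: +\<infinity> if unbounded,
  and -\<infinity> (so any upper bound holds) for the empty set.\<close>
definition width :: "real set \<Rightarrow> ereal" where
  "width S = Sup (ereal ` S) - Inf (ereal ` S)"

end

theory Submission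
  imports Defs
begin

text \<open>
  Fix \<open>t\<close> and \<open>\<Lambda>\<close> and let \<open>K(m) = 1 + \<Lambda>(\<mu> - m) + \<Lambda>\<^sup>2(1 + (\<mu> - m)\<^sup>2)/2\<close>. Since
  \<open>exp \<phi>(x) \<le> 1 + x + x\<^sup>2/2\<close> and the conditional mean and variance of \<open>X\<^sub>i\<close> are \<open>\<mu>\<close> and at most 1,
  \<open>exp (\<Sum>\<^sub>i\<^sub>\<le>\<^sub>n \<phi>(\<Lambda>(X\<^sub>i - m))) / K(m)\<^sup>n\<close> is a nonnegative supermartingale. Markov's inequality at
  \<open>m = \<mu> + \<delta>\<close>, and the same argument for \<open>-X\<close> and \<open>-\<phi>(-x)\<close> at \<open>m = \<mu> - \<delta>\<close>, shows that outside an
  event of probability \<open>\<beta>\<close> both sums violate the bounds defining \<open>CI\<^sup>C\<^sub>t(\<Lambda>, \<beta>)\<close>, as soon as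
  \<open>t log K(\<mu> + \<delta>) + 2 log(2/\<beta>) + t\<Lambda>\<^sup>2/2 \<le> 0\<close>. As \<open>\<phi>\<close> is monotone, the confidence set is then
  contained in \<open>(\<mu> - \<delta>, \<mu> + \<delta>)\<close>.

  For \<open>2\<^sup>j \<le> t < 2\<^sup>j\<^sup>+\<^sup>1\<close> the parameters \<open>\<Lambda>\<^sub>j, \<alpha>\<^sub>j\<close> make \<open>t\<Lambda>\<^sub>j\<^sup>2\<close> comparable to \<open>log(2/\<alpha>\<^sub>j)\<close>, and
  \<open>\<delta> = (1 + 10\<^sup>-\<^sup>4)(\<Lambda>\<^sub>j + 2 log(2/\<alpha>\<^sub>j)/(t\<Lambda>\<^sub>j))\<close> satisfies the condition above once \<open>t\<close> is large
  compared with \<open>log(1/\<alpha>)\<close>; since \<open>log(2/\<alpha>\<^sub>j) \<le> log(2\<zeta>) + 1.4 log(j + 1) + log(1/\<alpha>)\<close> and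
  \<open>j + 1 \<le> 2 log 2t\<close>, the width \<open>2\<delta>\<close> is below the stated bound. Finally \<open>\<alpha>\<^sub>j \<le> \<alpha>/\<zeta>\<close>, and
  \<open>3 < \<zeta> \<le> 3.5\<close> follows by comparing \<open>\<zeta>\<close> with telescoping sums of \<open>m\<^sup>-\<^sup>0\<^sup>.\<^sup>4\<close>.
\<close>

section \<open>Conditional exponential moments\<close>

lemma one_plus_half_square_pos: "0 < 1 + (z::real) + z\<^sup>2 / 2"
proof -
  have "0 < ((1 + z)\<^sup>2 + 1) / 2" by (simp add: add_nonneg_pos)
  also have "\<dots> = 1 + z + z\<^sup>2 / 2" by (simp add: power2_eq_square field_simps)
  finally show ?thesis .
qed

text \<open>The bound for \<open>E[1 + x + x\<^sup>2/2 | G]\<close> at \<open>x = \<Lambda>(Y - m)\<close> when \<open>E[Y | G] = \<nu>\<close>,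
  \<open>E[(Y - \<nu>)\<^sup>2 | G] \<le> 1\<close> and \<open>d = \<nu> - m\<close>.\<close>
definition catoni_factor :: "real \<Rightarrow> real \<Rightarrow> real" where
  "catoni_factor \<Lambda> d = 1 + \<Lambda> * d + \<Lambda>\<^sup>2 * (1 + d\<^sup>2) / 2"

lemma catoni_factor_pos: "0 < catoni_factor \<Lambda> d"
proof -
  have "catoni_factor \<Lambda> d = (1 + \<Lambda> * d + (\<Lambda> * d)\<^sup>2 / 2) + \<Lambda>\<^sup>2 / 2"
    by (simp add: catoni_factor_def power_mult_distrib field_simps)
  then show ?thesis
    using one_plus_half_square_pos[of "\<Lambda> * d"] by (simp add: add_pos_nonneg)
qed

lemma exp_le_one_plus_half_square:
  fixes x y :: real
  assumes "y \<le> ln (1 + x + x\<^sup>2 / 2)"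
  shows "exp y \<le> 1 + x + x\<^sup>2 / 2"
  using assms one_plus_half_square_pos[of x] by (metis exp_le_cancel_iff exp_ln)

context sigma_finite_subalgebra
begin

lemma nn_cond_exp_le_of_real_cond_exp_le:
  assumes f: "integrable M f" and nonneg: "\<And>x. 0 \<le> f x"
    and le: "AE x in M. real_cond_exp M F f x \<le> K"
  shows "AE x in M. nn_cond_exp M F (\<lambda>x. ennreal (f x)) x \<le> ennreal K"
proof -
  have [measurable]: "f \<in> borel_measurable M" using f by auto
  have "(\<integral>\<^sup>+ x. nn_cond_exp M F (\<lambda>x. ennreal (f x)) x \<partial>M) = (\<integral>\<^sup>+ x. ennreal (f x) \<partial>M)"
    using nn_cond_exp_intg[of "\<lambda>_. 1" "\<lambda>x. ennreal (f x)"] by simp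
  also have "\<dots> < \<infinity>"
    using f nonneg unfolding integrable_iff_bounded by simp
  finally have "AE x in M. nn_cond_exp M F (\<lambda>x. ennreal (f x)) x \<noteq> \<infinity>"
    by (intro nn_integral_PInf_AE) auto
  moreover have "AE x in M. nn_cond_exp M F (\<lambda>x. ennreal (- f x)) x = 0"
    using nn_cond_exp_F_meas[of "\<lambda>_. 0"] nonneg by (simp add: ennreal_neg)
  ultimately show ?thesis using le
  proof eventually_elim
    case (elim x)
    then have "enn2real (nn_cond_exp M F (\<lambda>x. ennreal (f x)) x) \<le> K"
      by (simp add: real_cond_exp_def)
    then have "ennreal (enn2real (nn_cond_exp M F (\<lambda>x. ennreal (f x)) x)) \<le> ennreal K"
      by (rule ennreal_leI)
    with elim(1) show ?case
      by (simp add: ennreal_enn2real_if top.not_eq_extremum split: if_splits)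
  qed
qed

end

context finite_measure_subalgebra
begin

lemma real_cond_exp_affine:
  assumes Y: "integrable M Y" and W: "integrable M W"
  shows "AE x in M. real_cond_exp M F (\<lambda>x. a + (b * Y x + c * W x)) x
    = a + (b * real_cond_exp M F Y x + c * real_cond_exp M F W x)"
proof -
  have "AE x in M. real_cond_exp M F (\<lambda>x. a + (b * Y x + c * W x)) x
      = real_cond_exp M F (\<lambda>x. a) x + real_cond_exp M F (\<lambda>x. b * Y x + c * W x) x"
    using Y W by (intro real_cond_exp_add) auto
  moreover have "AE x in M. real_cond_exp M F (\<lambda>x. a) x = a"
    by (intro real_cond_exp_F_meas) auto
  moreover have "AE x in M. real_cond_exp M F (\<lambda>x. b * Y x + c * W x) x
      = real_cond_exp M F (\<lambda>x. b * Y x) x + real_cond_exp M F (\<lambda>x. c * W x) x"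
    using Y W by (intro real_cond_exp_add) auto
  moreover have "AE x in M. real_cond_exp M F (\<lambda>x. b * Y x) x = b * real_cond_exp M F Y x"
    using Y by (rule real_cond_exp_cmult)
  moreover have "AE x in M. real_cond_exp M F (\<lambda>x. c * W x) x = c * real_cond_exp M F W x"
    using W by (rule real_cond_exp_cmult)
  ultimately show ?thesis by eventually_elim simp
qed

end

lemma nn_cond_exp_one_plus_half_square_le:
  fixes Y :: "'a \<Rightarrow> real"
  assumes "prob_space M" and "subalgebra M G"
    and Y: "integrable M Y" and W: "integrable M (\<lambda>\<omega>. (Y \<omega> - \<nu>)\<^sup>2)"
    and mean: "AE \<omega> in M. real_cond_exp M G Y \<omega> = \<nu>"
    and var: "AE \<omega> in M. real_cond_exp M G (\<lambda>\<omega>. (Y \<omega> - \<nu>)\<^sup>2) \<omega> \<le> 1"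
  shows "AE \<omega> in M. nn_cond_exp M G
           (\<lambda>\<omega>. ennreal (1 + \<Lambda> * (Y \<omega> - m) + (\<Lambda> * (Y \<omega> - m))\<^sup>2 / 2)) \<omega>
         \<le> ennreal (catoni_factor \<Lambda> (\<nu> - m))"
proof -
  interpret prob_space M by fact
  interpret finite_measure_subalgebra M G by unfold_locales fact
  define W where "W = (\<lambda>\<omega>. (Y \<omega> - \<nu>)\<^sup>2)"
  define a where "a = 1 + \<Lambda> * (\<nu> - m) + (\<Lambda> * (\<nu> - m))\<^sup>2 / 2 - (\<Lambda> + \<Lambda>\<^sup>2 * (\<nu> - m)) * \<nu>"
  define b where "b = \<Lambda> + \<Lambda>\<^sup>2 * (\<nu> - m)"
  define c where "c = \<Lambda>\<^sup>2 / 2"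
  have expand: "1 + \<Lambda> * (Y \<omega> - m) + (\<Lambda> * (Y \<omega> - m))\<^sup>2 / 2 = a + (b * Y \<omega> + c * W \<omega>)" for \<omega>
    by (simp add: W_def a_def b_def c_def power2_eq_square field_simps)
  have W_int: "integrable M W" using W by (simp add: W_def)
  have factor: "a + b * \<nu> + c = catoni_factor \<Lambda> (\<nu> - m)"
    by (simp add: catoni_factor_def a_def b_def c_def power2_eq_square field_simps)
  have "AE \<omega> in M. real_cond_exp M G (\<lambda>\<omega>. a + (b * Y \<omega> + c * W \<omega>)) \<omega>
      = a + (b * real_cond_exp M G Y \<omega> + c * real_cond_exp M G W \<omega>)"
    using Y W_int by (rule real_cond_exp_affine)
  then have le: "AE \<omega> in M. real_cond_exp M G (\<lambda>\<omega>. a + (b * Y \<omega> + c * W \<omega>)) \<omega>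
        \<le> catoni_factor \<Lambda> (\<nu> - m)"
    using mean var unfolding W_def[symmetric]
  proof eventually_elim
    case (elim \<omega>)
    have "c * real_cond_exp M G W \<omega> \<le> c"
      using elim(3) by (simp add: c_def mult_left_le)
    then show ?case using elim(1,2) factor by simp
  qed
  have int: "integrable M (\<lambda>\<omega>. a + (b * Y \<omega> + c * W \<omega>))"
    using Y W_int by auto
  have nonneg: "0 \<le> a + (b * Y \<omega> + c * W \<omega>)" for \<omega>
    using one_plus_half_square_pos[of "\<Lambda> * (Y \<omega> - m)"] by (simp add: expand)
  show ?thesis
    using nn_cond_exp_le_of_real_cond_exp_le[OF int nonneg le] by (simp only: expand)
qed


section \<open>Width of the Catoni confidence set\<close>

lemma width_le_iff: "width S \<le> ereal c \<longleftrightarrow> (\<forall>x\<in>S. \<forall>y\<in>S. y - x \<le> c)"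
proof (cases "S = {}")
  case True
  then show ?thesis by (simp add: width_def bot_ereal_def top_ereal_def)
next
  case False
  then obtain x0 where x0: "x0 \<in> S" by auto
  show ?thesis
  proof
    assume w: "width S \<le> ereal c"
    show "\<forall>x\<in>S. \<forall>y\<in>S. y - x \<le> c"
    proof (intro ballI)
      fix x y assume "x \<in> S" "y \<in> S"
      then have "ereal y - ereal x \<le> Sup (ereal ` S) - Inf (ereal ` S)"
        by (intro ereal_minus_mono Sup_upper Inf_lower) auto
      also have "\<dots> \<le> ereal c" using w by (simp add: width_def)
      finally show "y - x \<le> c" by simp
    qed
  next
    assume H: "\<forall>x\<in>S. \<forall>y\<in>S. y - x \<le> c"
    have sup_le: "Sup (ereal ` S) \<le> ereal (x + c)" if "x \<in> S" for x
      using H that by (intro Sup_least) (force simp: algebra_simps)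
    have "ereal x0 \<le> Sup (ereal ` S)" using x0 by (intro Sup_upper) auto
    with sup_le[OF x0] obtain s where s: "Sup (ereal ` S) = ereal s"
      by (cases "Sup (ereal ` S)") auto
    have "ereal (s - c) \<le> Inf (ereal ` S)"
      using sup_le s by (intro Inf_greatest) (force simp: algebra_simps)
    moreover have "Inf (ereal ` S) \<le> ereal x0" using x0 by (intro Inf_lower) auto
    ultimately obtain r where "Inf (ereal ` S) = ereal r" "s - c \<le> r"
      by (cases "Inf (ereal ` S)") auto
    then show "width S \<le> ereal c" by (simp add: width_def s)
  qed
qed

lemma width_le_iff_rat:
  assumes S: "is_interval S" and "0 \<le> c"
  shows "width S \<le> ereal c \<longleftrightarrow>
    (\<forall>p q :: rat. of_rat p \<in> S \<longrightarrow> of_rat q \<in> S \<longrightarrow> of_rat q - of_rat p \<le> c)"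
  unfolding width_le_iff
proof (intro iffI ballI allI impI)
  fix p q :: rat
  assume "\<forall>x\<in>S. \<forall>y\<in>S. y - x \<le> c" "of_rat p \<in> S" "of_rat q \<in> S"
  then show "of_rat q - of_rat p \<le> c" by auto
next
  fix x y
  assume H: "\<forall>p q :: rat. of_rat p \<in> S \<longrightarrow> of_rat q \<in> S \<longrightarrow> of_rat q - of_rat p \<le> c"
    and xy: "x \<in> S" "y \<in> S"
  show "y - x \<le> c"
  proof (rule ccontr)
    assume "\<not> y - x \<le> c"
    define e where "e = (y - x - c) / 2"
    have e: "0 < e" "e \<le> (y - x) / 2" using \<open>\<not> y - x \<le> c\<close> \<open>0 \<le> c\<close> by (auto simp: e_def)
    obtain r1 where r1: "r1 \<in> \<rat>" "x < r1" "r1 < x + e"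
      using Rats_dense_in_real[of x "x + e"] e by auto
    obtain r2 where r2: "r2 \<in> \<rat>" "y - e < r2" "r2 < y"
      using Rats_dense_in_real[of "y - e" y] e by auto
    obtain p q where "r1 = of_rat p" "r2 = of_rat q" using r1(1) r2(1) Rats_cases by metis
    moreover have "x \<le> r1" "r1 \<le> y" "x \<le> r2" "r2 \<le> y" using r1 r2 e by auto
    then have "r1 \<in> S" "r2 \<in> S" using S xy unfolding is_interval_1 by blast+
    ultimately have "r2 - r1 \<le> c" using H by auto
    moreover have "2 * e = y - x - c" by (simp add: e_def)
    ultimately show False using r1 r2 by linarith
  qed
qed

lemma catoni_sum_antimono:
  fixes \<phi> :: "real \<Rightarrow> real" and x :: "nat \<Rightarrow> real"
  assumes "mono \<phi>" "0 \<le> \<Lambda>" "m \<le> m'"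
  shows "(\<Sum>i=1..t. \<phi> (\<Lambda> * (x i - m'))) \<le> (\<Sum>i=1..t. \<phi> (\<Lambda> * (x i - m)))"
  using assms by (intro sum_mono monoD[OF assms(1)] mult_left_mono) auto

lemma is_interval_CI_C:
  assumes "mono \<phi>" "0 \<le> \<Lambda>"
  shows "is_interval (CI_C x \<phi> t \<Lambda> \<beta>)"
  unfolding is_interval_1
proof (intro ballI allI impI)
  fix a b m assume "a \<in> CI_C x \<phi> t \<Lambda> \<beta>" "b \<in> CI_C x \<phi> t \<Lambda> \<beta>" "a \<le> m \<and> m \<le> b"
  with catoni_sum_antimono[OF assms, where m = a and m' = m and t = t and x = x]
    catoni_sum_antimono[OF assms, where m = m and m' = b and t = t and x = x]
  show "m \<in> CI_C x \<phi> t \<Lambda> \<beta>" unfolding CI_C_def by auto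
qed

lemma CI_C_subset_greaterThanLessThan:
  assumes "mono \<phi>" "0 \<le> \<Lambda>"
    and a: "real t * \<Lambda>\<^sup>2 / 2 + ln (2 / \<beta>) < (\<Sum>i=1..t. \<phi> (\<Lambda> * (x i - a)))"
    and b: "(\<Sum>i=1..t. \<phi> (\<Lambda> * (x i - b))) < - (real t * \<Lambda>\<^sup>2 / 2) - ln (2 / \<beta>)"
  shows "CI_C x \<phi> t \<Lambda> \<beta> \<subseteq> {a<..<b}"
proof
  fix m assume m: "m \<in> CI_C x \<phi> t \<Lambda> \<beta>"
  have "\<not> m \<le> a"
    using catoni_sum_antimono[OF assms(1,2), where m = m and m' = a and t = t and x = x] a m
    by (auto simp: CI_C_def)
  moreover have "\<not> b \<le> m"
    using catoni_sum_antimono[OF assms(1,2), where m = b and m' = m and t = t and x = x] b m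
    by (auto simp: CI_C_def)
  ultimately show "m \<in> {a<..<b}" by simp
qed


section \<open>Supermartingale tail bounds\<close>

locale cond_mean_var_process = prob_space M
  for M :: "'a measure" +
  fixes F :: "nat \<Rightarrow> 'a measure" and X :: "nat \<Rightarrow> 'a \<Rightarrow> real" and \<mu> :: real
  assumes subalgebra_F: "\<And>t. subalgebra M (F t)"
    and filtration_F: "filtration (space M) F"
    and adapted: "\<And>t. t \<ge> 1 \<Longrightarrow> X t \<in> borel_measurable (F t)"
    and integrable_X: "\<And>t. t \<ge> 1 \<Longrightarrow> integrable M (X t)"
    and integrable_sq: "\<And>t. t \<ge> 1 \<Longrightarrow> integrable M (\<lambda>\<omega>. (X t \<omega> - \<mu>)\<^sup>2)"
    and cond_mean: "\<And>t. t \<ge> 1 \<Longrightarrow> AE \<omega> in M. real_cond_exp M (F (t - 1)) (X t) \<omega> = \<mu>"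
    and cond_var: "\<And>t. t \<ge> 1 \<Longrightarrow>
      AE \<omega> in M. real_cond_exp M (F (t - 1)) (\<lambda>\<omega>. (X t \<omega> - \<mu>)\<^sup>2) \<omega> \<le> 1"
begin

lemma borel_measurable_catoni_sum_F:
  fixes g :: "real \<Rightarrow> real"
  assumes [measurable]: "g \<in> borel_measurable borel"
  shows "(\<lambda>\<omega>. \<Sum>i=1..n. g (\<Lambda> * (X i \<omega> - m))) \<in> borel_measurable (F n)"
proof (rule borel_measurable_sum)
  fix i assume i: "i \<in> {1..n}"
  have "subalgebra (F n) (F i)"
    using i filtration.sets_F_mono[OF filtration_F] filtration.space_F[OF filtration_F]
    by (simp add: subalgebra_def)
  then have [measurable]: "X i \<in> borel_measurable (F n)"
    using adapted i by (auto intro: measurable_from_subalg)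
  show "(\<lambda>\<omega>. g (\<Lambda> * (X i \<omega> - m))) \<in> borel_measurable (F n)" by measurable
qed

lemma borel_measurable_catoni_sum:
  fixes g :: "real \<Rightarrow> real"
  assumes "g \<in> borel_measurable borel"
  shows "(\<lambda>\<omega>. \<Sum>i=1..n. g (\<Lambda> * (X i \<omega> - m))) \<in> borel_measurable M"
  using measurable_from_subalg[OF subalgebra_F borel_measurable_catoni_sum_F[OF assms]] .

lemma nn_integral_exp_catoni_sum_le:
  fixes g :: "real \<Rightarrow> real"
  assumes g: "g \<in> borel_measurable borel" and g_le: "\<And>x. g x \<le> ln (1 + x + x\<^sup>2 / 2)"
  shows "(\<integral>\<^sup>+\<omega>. ennreal (exp (\<Sum>i=1..n. g (\<Lambda> * (X i \<omega> - m)))) \<partial>M)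
    \<le> ennreal (catoni_factor \<Lambda> (\<mu> - m) ^ n)"
proof (induction n)
  case 0
  show ?case by (simp add: emeasure_space_1)
next
  case (Suc n)
  interpret finite_measure_subalgebra M "F n" by unfold_locales (rule subalgebra_F)
  define K where "K = catoni_factor \<Lambda> (\<mu> - m)"
  define S where "S = (\<lambda>\<omega>. exp (\<Sum>i=1..n. g (\<Lambda> * (X i \<omega> - m))))"
  define Q where "Q = (\<lambda>\<omega>. 1 + \<Lambda> * (X (Suc n) \<omega> - m) + (\<Lambda> * (X (Suc n) \<omega> - m))\<^sup>2 / 2)"
  have S_meas[measurable]: "S \<in> borel_measurable (F n)"
    using borel_measurable_catoni_sum_F[OF g] unfolding S_def by measurable
  have [measurable]: "X (Suc n) \<in> borel_measurable M"
    using adapted[of "Suc n"] measurable_from_subalg[OF subalgebra_F] by auto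
  have Q_meas[measurable]: "Q \<in> borel_measurable M" unfolding Q_def by measurable
  have "(\<integral>\<^sup>+\<omega>. ennreal (exp (\<Sum>i=1..Suc n. g (\<Lambda> * (X i \<omega> - m)))) \<partial>M)
      = (\<integral>\<^sup>+\<omega>. ennreal (S \<omega>) * ennreal (exp (g (\<Lambda> * (X (Suc n) \<omega> - m)))) \<partial>M)"
    by (simp add: S_def exp_add ennreal_mult)
  also have "\<dots> \<le> (\<integral>\<^sup>+\<omega>. ennreal (S \<omega>) * ennreal (Q \<omega>) \<partial>M)"
    unfolding Q_def
    by (intro nn_integral_mono mult_left_mono ennreal_leI exp_le_one_plus_half_square g_le) simp
  also have "\<dots> = (\<integral>\<^sup>+\<omega>. ennreal (S \<omega>) * nn_cond_exp M (F n) (\<lambda>\<omega>. ennreal (Q \<omega>)) \<omega> \<partial>M)"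
    by (rule nn_cond_exp_intg[symmetric]) auto
  also have "\<dots> \<le> (\<integral>\<^sup>+\<omega>. ennreal (S \<omega>) * ennreal K \<partial>M)"
  proof (rule nn_integral_mono_AE)
    have "AE \<omega> in M. nn_cond_exp M (F n) (\<lambda>\<omega>. ennreal (Q \<omega>)) \<omega> \<le> ennreal K"
      unfolding Q_def K_def
      using nn_cond_exp_one_plus_half_square_le[OF prob_space_axioms subalgebra_F
          integrable_X integrable_sq cond_mean cond_var, of "Suc n"]
      by simp
    then show "AE \<omega> in M. ennreal (S \<omega>) * nn_cond_exp M (F n) (\<lambda>\<omega>. ennreal (Q \<omega>)) \<omega>
        \<le> ennreal (S \<omega>) * ennreal K"
      by eventually_elim (rule mult_left_mono, auto)
  qed
  also have "\<dots> = (\<integral>\<^sup>+\<omega>. ennreal (S \<omega>) \<partial>M) * ennreal K"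
    using measurable_from_subalg[OF subalgebra_F S_meas] by (intro nn_integral_multc) auto
  also have "\<dots> \<le> ennreal (K ^ n) * ennreal K"
    using Suc.IH unfolding S_def K_def by (intro mult_right_mono) auto
  also have "\<dots> = ennreal (K ^ Suc n)"
    using catoni_factor_pos[of \<Lambda> "\<mu> - m"] by (simp add: K_def ennreal_mult[symmetric] mult.commute)
  finally show ?case unfolding K_def .
qed

lemma prob_catoni_sum_ge:
  fixes g :: "real \<Rightarrow> real"
  assumes g: "g \<in> borel_measurable borel" and g_le: "\<And>x. g x \<le> ln (1 + x + x\<^sup>2 / 2)"
  shows "prob {\<omega> \<in> space M. real n * ln (catoni_factor \<Lambda> (\<mu> - m)) + c
            \<le> (\<Sum>i=1..n. g (\<Lambda> * (X i \<omega> - m)))} \<le> exp (- c)"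
proof -
  define K where "K = catoni_factor \<Lambda> (\<mu> - m)"
  define T where "T = real n * ln K + c"
  define S where "S = (\<lambda>\<omega>. \<Sum>i=1..n. g (\<Lambda> * (X i \<omega> - m)))"
  define A where "A = {\<omega> \<in> space M. T \<le> S \<omega>}"
  have K_pos: "0 < K" unfolding K_def by (rule catoni_factor_pos)
  have [measurable]: "S \<in> borel_measurable M"
    unfolding S_def using g by (rule borel_measurable_catoni_sum)
  have A_sets[measurable]: "A \<in> sets M" unfolding A_def by measurable
  have "ennreal (prob A * exp T) = (\<integral>\<^sup>+\<omega>. ennreal (exp T) * indicator A \<omega> \<partial>M)"
    by (simp add: emeasure_eq_measure ennreal_mult nn_integral_cmult_indicator mult.commute)
  also have "\<dots> \<le> (\<integral>\<^sup>+\<omega>. ennreal (exp (S \<omega>)) \<partial>M)"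
    by (intro nn_integral_mono) (auto simp: A_def indicator_def)
  also have "\<dots> \<le> ennreal (K ^ n)"
    unfolding S_def K_def using g g_le by (rule nn_integral_exp_catoni_sum_le)
  finally have "prob A * exp T \<le> K ^ n"
    using K_pos by (simp add: ennreal_le_iff)
  then have "prob A \<le> K ^ n / exp T" by (simp add: field_simps)
  also have "\<dots> = exp (- c)"
    using K_pos by (simp add: T_def exp_add exp_minus exp_of_nat_mult field_simps)
  finally show ?thesis unfolding A_def S_def T_def K_def .
qed

lemma cond_mean_var_process_uminus: "cond_mean_var_process M F (\<lambda>i \<omega>. - X i \<omega>) (- \<mu>)"
proof unfold_locales
  fix t :: nat assume t: "t \<ge> 1"
  show "(\<lambda>\<omega>. - X t \<omega>) \<in> borel_measurable (F t)" using adapted[OF t] by measurable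
  show "integrable M (\<lambda>\<omega>. - X t \<omega>)" using integrable_X[OF t] by simp
  have sq: "(\<lambda>\<omega>. (- X t \<omega> - - \<mu>)\<^sup>2) = (\<lambda>\<omega>. (X t \<omega> - \<mu>)\<^sup>2)"
    by (simp add: power2_commute)
  show "integrable M (\<lambda>\<omega>. (- X t \<omega> - - \<mu>)\<^sup>2)" unfolding sq using integrable_sq[OF t] .
  show "AE \<omega> in M. real_cond_exp M (F (t - 1)) (\<lambda>\<omega>. (- X t \<omega> - - \<mu>)\<^sup>2) \<omega> \<le> 1"
    unfolding sq using cond_var[OF t] .
  interpret finite_measure_subalgebra M "F (t - 1)" by unfold_locales (rule subalgebra_F)
  show "AE \<omega> in M. real_cond_exp M (F (t - 1)) (\<lambda>\<omega>. - X t \<omega>) \<omega> = - \<mu>"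
    using real_cond_exp_cmult[OF integrable_X[OF t], of "-1"] cond_mean[OF t]
    by eventually_elim simp
qed (use subalgebra_F filtration_F in \<open>auto simp: filtration_def\<close>)

lemma prob_catoni_sum_le:
  fixes g :: "real \<Rightarrow> real"
  assumes g: "g \<in> borel_measurable borel" and g_ge: "\<And>x. - ln (1 - x + x\<^sup>2 / 2) \<le> g x"
  shows "prob {\<omega> \<in> space M. (\<Sum>i=1..n. g (\<Lambda> * (X i \<omega> - m)))
            \<le> - (real n * ln (catoni_factor \<Lambda> (m - \<mu>)) + c)} \<le> exp (- c)"
proof -
  interpret neg: cond_mean_var_process M F "\<lambda>i \<omega>. - X i \<omega>" "- \<mu>"
    by (rule cond_mean_var_process_uminus)
  have "(\<lambda>x. - g (- x)) \<in> borel_measurable borel" using g by measurable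
  moreover have "- g (- x) \<le> ln (1 + x + x\<^sup>2 / 2)" for x using g_ge[of "- x"] by simp
  ultimately have "prob {\<omega> \<in> space M. real n * ln (catoni_factor \<Lambda> (- \<mu> - - m)) + c
      \<le> (\<Sum>i=1..n. - g (- (\<Lambda> * (- X i \<omega> - - m))))} \<le> exp (- c)"
    by (rule neg.prob_catoni_sum_ge)
  moreover have "{\<omega> \<in> space M. (\<Sum>i=1..n. g (\<Lambda> * (X i \<omega> - m)))
        \<le> - (real n * ln (catoni_factor \<Lambda> (m - \<mu>)) + c)}
      = {\<omega> \<in> space M. real n * ln (catoni_factor \<Lambda> (- \<mu> - - m)) + c
        \<le> (\<Sum>i=1..n. - g (- (\<Lambda> * (- X i \<omega> - - m))))}"
    by (auto simp: sum_negf algebra_simps)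
  ultimately show ?thesis by simp
qed

lemma sets_width_CI_C_le:
  assumes "mono \<phi>" "0 \<le> \<Lambda>" "0 \<le> c"
  shows "{\<omega> \<in> space M. width (CI_C (\<lambda>i. X i \<omega>) \<phi> t \<Lambda> \<beta>) \<le> ereal c} \<in> sets M"
proof -
  have [measurable]: "\<phi> \<in> borel_measurable borel" using assms(1) by (rule borel_measurable_mono)
  have [measurable]: "(\<lambda>\<omega>. \<Sum>i=1..t. \<phi> (\<Lambda> * (X i \<omega> - m))) \<in> borel_measurable M" for m
    by (rule borel_measurable_catoni_sum) measurable
  have "{\<omega> \<in> space M. width (CI_C (\<lambda>i. X i \<omega>) \<phi> t \<Lambda> \<beta>) \<le> ereal c}
      = {\<omega> \<in> space M. \<forall>p q :: rat. of_rat p \<in> CI_C (\<lambda>i. X i \<omega>) \<phi> t \<Lambda> \<beta> \<longrightarrow>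
           of_rat q \<in> CI_C (\<lambda>i. X i \<omega>) \<phi> t \<Lambda> \<beta> \<longrightarrow> of_rat q - of_rat p \<le> c}"
    using width_le_iff_rat[OF is_interval_CI_C[OF assms(1,2)] assms(3)] by simp
  also have "\<dots> \<in> sets M" unfolding CI_C_def mem_Collect_eq by measurable
  finally show ?thesis .
qed

lemma prob_width_CI_C_le:
  assumes \<phi>: "catoni_type \<phi>" and \<Lambda>: "0 \<le> \<Lambda>" and \<beta>: "0 < \<beta>"
    and K: "real t * ln (catoni_factor \<Lambda> (- \<delta>)) + 2 * ln (2 / \<beta>) + real t * \<Lambda>\<^sup>2 / 2 \<le> 0"
    and c: "2 * \<delta> \<le> c" "0 \<le> c"
  shows "1 - \<beta> \<le> prob {\<omega> \<in> space M. width (CI_C (\<lambda>i. X i \<omega>) \<phi> t \<Lambda> \<beta>) \<le> ereal c}"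
proof -
  have mono: "mono \<phi>" and lo: "\<And>x. - ln (1 - x + x\<^sup>2 / 2) \<le> \<phi> x"
    and up: "\<And>x. \<phi> x \<le> ln (1 + x + x\<^sup>2 / 2)"
    using \<phi> by (auto simp: catoni_type_def)
  have [measurable]: "\<phi> \<in> borel_measurable borel" using mono by (rule borel_measurable_mono)
  define L where "L = ln (2 / \<beta>)"
  define T where "T = real t * ln (catoni_factor \<Lambda> (- \<delta>)) + L"
  define S where "S m \<omega> = (\<Sum>i=1..t. \<phi> (\<Lambda> * (X i \<omega> - m)))" for m \<omega>
  define E where "E = {\<omega> \<in> space M. width (CI_C (\<lambda>i. X i \<omega>) \<phi> t \<Lambda> \<beta>) \<le> ereal c}"
  define B1 where "B1 = {\<omega> \<in> space M. T \<le> S (\<mu> + \<delta>) \<omega>}"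
  define B2 where "B2 = {\<omega> \<in> space M. S (\<mu> - \<delta>) \<omega> \<le> - T}"
  have [measurable]: "S m \<in> borel_measurable M" for m
    unfolding S_def by (rule borel_measurable_catoni_sum) measurable
  have E_sets: "E \<in> sets M"
    unfolding E_def using mono \<Lambda> c(2) by (rule sets_width_CI_C_le)
  have exp_L: "exp (- L) = \<beta> / 2" using \<beta> by (simp add: L_def exp_minus)
  have "prob B1 \<le> \<beta> / 2"
    using prob_catoni_sum_ge[where g = \<phi> and n = t and m = "\<mu> + \<delta>" and c = L] up exp_L
    by (simp add: B1_def T_def S_def)
  moreover have "prob B2 \<le> \<beta> / 2"
    using prob_catoni_sum_le[where g = \<phi> and n = t and m = "\<mu> - \<delta>" and c = L] lo exp_L
    by (simp add: B2_def T_def S_def)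
  ultimately have "prob (B1 \<union> B2) \<le> \<beta>"
    using measure_Un_le[of B1 M B2] by (simp add: B1_def B2_def)
  then have "1 - \<beta> \<le> prob (space M - (B1 \<union> B2))"
    by (subst prob_compl) (auto simp: B1_def B2_def)
  also have "\<dots> \<le> prob E"
  proof (rule finite_measure_mono[OF _ E_sets], rule subsetI)
    fix \<omega> assume \<omega>: "\<omega> \<in> space M - (B1 \<union> B2)"
    then have CI: "CI_C (\<lambda>i. X i \<omega>) \<phi> t \<Lambda> \<beta> \<subseteq> {\<mu> - \<delta><..<\<mu> + \<delta>}"
      using K by (intro CI_C_subset_greaterThanLessThan[OF mono \<Lambda>])
        (auto simp: B1_def B2_def T_def S_def L_def)
    have "y - x \<le> c" if "x \<in> CI_C (\<lambda>i. X i \<omega>) \<phi> t \<Lambda> \<beta>" "y \<in> CI_C (\<lambda>i. X i \<omega>) \<phi> t \<Lambda> \<beta>" for x y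
      using subsetD[OF CI that(1)] subsetD[OF CI that(2)] c(1) by simp
    with \<omega> show "\<omega> \<in> E" unfolding E_def width_le_iff by blast
  qed
  finally show ?thesis unfolding E_def .
qed

end

section \<open>Bounds on \<open>\<zeta>(1.4)\<close>\<close>

lemma powr_neg_diff_bounds:
  fixes x p :: real
  assumes x: "0 < x" and p: "0 < p"
  shows "p * (x + 1) powr (- p - 1) \<le> x powr (- p) - (x + 1) powr (- p)"
    and "x powr (- p) - (x + 1) powr (- p) \<le> p * x powr (- p - 1)"
proof -
  have "((\<lambda>z. z powr (- p)) has_real_derivative - p * z powr (- p - 1)) (at z)"
    if "x \<le> z" for z
    using has_real_derivative_powr[of z "- p"] that x by simp
  then obtain z where z: "x < z" "z < x + 1"
    and mvt: "(x + 1) powr (- p) - x powr (- p) = (x + 1 - x) * (- p * z powr (- p - 1))"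
    using MVT2[of x "x + 1" "\<lambda>z. z powr (- p)" "\<lambda>z. - p * z powr (- p - 1)"] by auto
  have "p * (x + 1) powr (- p - 1) \<le> p * z powr (- p - 1)"
    and "p * z powr (- p - 1) \<le> p * x powr (- p - 1)"
    using z x p by (auto intro!: mult_left_mono powr_mono2')
  with mvt show "p * (x + 1) powr (- p - 1) \<le> x powr (- p) - (x + 1) powr (- p)"
    and "x powr (- p) - (x + 1) powr (- p) \<le> p * x powr (- p - 1)"
    by simp_all
qed

lemma sums_powr_neg_telescope:
  fixes p c :: real
  assumes "0 < p"
  shows "(\<lambda>n. (real n + c) powr (- p) - (real (Suc n) + c) powr (- p)) sums (c powr (- p))"
proof -
  have "filterlim (\<lambda>n. real n + c) at_top sequentially"
    using filterlim_tendsto_add_at_top[OF tendsto_const filterlim_real_sequentially, of c]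
    by (simp add: add.commute)
  then have "(\<lambda>n. (real n + c) powr (- p)) \<longlonglongrightarrow> 0"
    using assms by (intro tendsto_neg_powr) simp_all
  from telescope_sums'[OF this] show ?thesis by simp
qed

lemma powr_divide_le_of_power_le:
  fixes x b :: real
  assumes "0 < x" "0 \<le> b" "0 < n" "x ^ k \<le> b ^ n"
  shows "x powr (real k / real n) \<le> b"
proof -
  have "(x powr (real k / real n)) ^ n = (x powr (real k / real n)) powr real n"
    using assms(1) by (simp add: powr_realpow)
  also have "\<dots> = x ^ k" using assms(1,3) by (simp add: powr_powr powr_realpow)
  finally show ?thesis
    using assms power_mono_iff[of "x powr (real k / real n)" b n] by simp
qed

lemma zeta14_eq_suminf: "zeta14 = (\<Sum>m. (real m + 1) powr (- 1.4))"
  unfolding zeta14_def by (simp add: powr_minus_divide add.commute)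

lemma zeta14_tail_le:
  "(real (Suc n) + 1) powr (- 1.4)
    \<le> 2.5 * ((real n + 1) powr (- 0.4) - (real (Suc n) + 1) powr (- 0.4))"
  using powr_neg_diff_bounds(1)[of "real n + 1" "0.4"] by (simp add: add_ac)

lemma summable_zeta14: "summable (\<lambda>m. (real m + 1) powr (- 1.4))"
proof -
  have "summable (\<lambda>n. 2.5 * ((real n + 1) powr (- 0.4) - (real (Suc n) + 1) powr (- 0.4)))"
    by (intro summable_mult sums_summable[OF sums_powr_neg_telescope]) simp
  then have "summable (\<lambda>n. (real (Suc n) + 1) powr (- 1.4))"
    by (rule summable_comparison_test'[where N = 0]) (use zeta14_tail_le in simp)
  then show ?thesis
    using summable_Suc_iff[where f = "\<lambda>m. (real m + 1) powr (- 1.4)"] by simp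
qed

lemma zeta14_le: "zeta14 \<le> 3.5"
proof -
  have "summable (\<lambda>n. (real (Suc n) + 1) powr (- 1.4))"
    using summable_zeta14 summable_Suc_iff[where f = "\<lambda>m. (real m + 1) powr (- 1.4)"] by simp
  then have "(\<Sum>n. (real (Suc n) + 1) powr (- 1.4)) \<le> 2.5 * 1 powr (- 0.4)"
    by (intro sums_le[OF zeta14_tail_le summable_sums sums_mult[OF sums_powr_neg_telescope]])
      simp_all
  then show ?thesis
    using suminf_split_head[OF summable_zeta14] by (simp add: zeta14_eq_suminf)
qed

lemma zeta14_gt_3: "3 < zeta14"
proof -
  have head: "(\<Sum>m<3. (real m + 1) powr (- 1.4)) = 1 + 2 powr (- 1.4) + 3 powr (- 1.4)"
    by (simp add: numeral_3_eq_3)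
  have "2.5 * ((real n + 4) powr (- 0.4) - (real (Suc n) + 4) powr (- 0.4))
      \<le> (real (n + 3) + 1) powr (- 1.4)" for n
    using powr_neg_diff_bounds(2)[of "real n + 4" "0.4"] by (simp add: add_ac)
  then have "2.5 * 4 powr (- 0.4) \<le> (\<Sum>n. (real (n + 3) + 1) powr (- 1.4))"
    using summable_ignore_initial_segment[OF summable_zeta14, of 3]
    by (intro sums_le[OF _ sums_mult[OF sums_powr_neg_telescope] summable_sums]) simp_all
  moreover have "37 / 100 \<le> (2::real) powr (- 1.4)"
    using powr_divide_le_of_power_le[of 2 "100 / 37" 5 7]
    by (simp add: powr_minus_divide field_simps)
  moreover have "21 / 100 \<le> (3::real) powr (- 1.4)"
    using powr_divide_le_of_power_le[of 3 "100 / 21" 5 7]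
    by (simp add: powr_minus_divide field_simps)
  moreover have "57 / 100 \<le> (4::real) powr (- 0.4)"
    using powr_divide_le_of_power_le[of 4 "100 / 57" 5 2]
    by (simp add: powr_minus_divide field_simps)
  ultimately have
    "3 < (\<Sum>n. (real (n + 3) + 1) powr (- 1.4)) + (1 + 2 powr (- 1.4) + 3 powr (- 1.4))"
    by linarith
  then show ?thesis
    using suminf_split_initial_segment[OF summable_zeta14, of 3] head
    by (simp add: zeta14_eq_suminf)
qed

section \<open>The stitched parameters\<close>

lemma add_four_div_le:
  fixes u :: real
  assumes "sqrt 2 \<le> u" "u \<le> 2 * sqrt 2"
  shows "u + 4 / u \<le> 3 * sqrt 2"
proof -
  have u: "0 < u" using assms(1) real_sqrt_gt_zero[of 2] by linarith
  have "0 \<le> (u - sqrt 2) * (2 * sqrt 2 - u)" using assms by simp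
  then have "u * u + 4 \<le> 3 * sqrt 2 * u" by (simp add: algebra_simps)
  with u show ?thesis by (simp add: field_simps)
qed

lemma catoni_exponent_nonpos:
  fixes t L \<Lambda> \<eta> :: real
  assumes t: "0 < t" and L: "0 < L" and \<Lambda>: "0 < \<Lambda>" and t\<Lambda>: "t * \<Lambda>\<^sup>2 \<le> 3 * L"
    and \<eta>: "0 < \<eta>" "\<eta> \<le> 1 / 100" and small: "3 * L \<le> \<eta> * t"
  defines "\<delta> \<equiv> (1 + \<eta>) * (\<Lambda> + 2 * L / (t * \<Lambda>))"
  shows "t * ln (catoni_factor \<Lambda> (- \<delta>)) + 2 * L + t * \<Lambda>\<^sup>2 / 2 \<le> 0"
proof -
  define D where "D = \<Lambda> + 2 * L / (t * \<Lambda>)"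
  have \<delta>_D: "\<delta> = (1 + \<eta>) * D" by (simp add: \<delta>_def D_def)
  have \<Lambda>D: "\<Lambda> * D = \<Lambda>\<^sup>2 + 2 * L / t"
    using t \<Lambda> by (simp add: D_def field_simps power2_eq_square)
  have "\<Lambda> * D \<le> 5 * L / t" unfolding \<Lambda>D using t t\<Lambda> by (simp add: field_simps)
  also have "\<dots> \<le> 5 * \<eta> / 3" using t small by (simp add: field_simps)
  moreover have "(1 + \<eta>)\<^sup>2 \<le> 6 / 5"
  proof -
    have "(1 + \<eta>) * (1 + \<eta>) \<le> (101 / 100) * (101 / 100)" using \<eta> by (intro mult_mono) auto
    then show ?thesis by (simp add: power2_eq_square)
  qed
  moreover have "0 \<le> \<Lambda> * D" using t L by (simp add: \<Lambda>D)
  ultimately have "\<Lambda> * D * (1 + \<eta>)\<^sup>2 \<le> 5 * \<eta> / 3 * (6 / 5)"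
    using \<eta> by (intro mult_mono) auto
  then have margin: "- \<eta> + \<Lambda> * D * (1 + \<eta>)\<^sup>2 / 2 \<le> 0" by simp
  txt \<open>By \<open>ln K \<le> K - 1\<close> the exponent is at most a quadratic in \<open>\<Lambda> D\<close>, which is small.\<close>
  have "t * ln (catoni_factor \<Lambda> (- \<delta>)) \<le> t * (catoni_factor \<Lambda> (- \<delta>) - 1)"
    using t catoni_factor_pos ln_le_minus_one by (simp add: mult_left_mono)
  moreover have "t * (catoni_factor \<Lambda> (- \<delta>) - 1) + 2 * L + t * \<Lambda>\<^sup>2 / 2
      = - t * \<Lambda> * \<delta> + t * \<Lambda>\<^sup>2 * \<delta>\<^sup>2 / 2 + (t * \<Lambda>\<^sup>2 + 2 * L)"
    by (simp add: catoni_factor_def field_simps)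
  moreover have "t * \<Lambda>\<^sup>2 + 2 * L = t * (\<Lambda> * D)" unfolding \<Lambda>D using t by (simp add: field_simps)
  moreover have "- t * \<Lambda> * \<delta> + t * \<Lambda>\<^sup>2 * \<delta>\<^sup>2 / 2 + t * (\<Lambda> * D)
      = t * (\<Lambda> * D) * (- \<eta> + \<Lambda> * D * (1 + \<eta>)\<^sup>2 / 2)"
    unfolding \<delta>_D by (simp add: power2_eq_square field_simps)
  moreover have "t * (\<Lambda> * D) * (- \<eta> + \<Lambda> * D * (1 + \<eta>)\<^sup>2 / 2) \<le> 0"
    using t \<open>0 \<le> \<Lambda> * D\<close> margin by (simp add: mult_nonneg_nonpos)
  ultimately show ?thesis by linarith
qed

lemma catoni_radius_sq_le:
  fixes t L w \<eta> :: real
  assumes t: "0 < t" and L: "0 < L" and w: "0 < w"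
    and tw: "sqrt 2 \<le> t * w" "t * w \<le> 2 * sqrt 2"
  defines "\<Lambda> \<equiv> sqrt (L * w)"
  defines "\<delta> \<equiv> (1 + \<eta>) * (\<Lambda> + 2 * L / (t * \<Lambda>))"
  shows "(2 * \<delta>)\<^sup>2 \<le> 4 * (1 + \<eta>)\<^sup>2 * (4 + 3 * sqrt 2) * L / t"
proof -
  have \<Lambda>2: "\<Lambda>\<^sup>2 = L * w" using L w by (simp add: \<Lambda>_def)
  have "0 < \<Lambda>" using L w by (simp add: \<Lambda>_def)
  have "(\<Lambda> + 2 * L / (t * \<Lambda>))\<^sup>2 = \<Lambda>\<^sup>2 + 4 * L / t + 4 * L\<^sup>2 / (t\<^sup>2 * \<Lambda>\<^sup>2)"
    using t \<open>0 < \<Lambda>\<close> by (simp add: power2_eq_square field_simps)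
  also have "\<dots> = L / t * (t * w + 4 / (t * w) + 4)"
    unfolding \<Lambda>2 using t L w by (simp add: power2_eq_square field_simps)
  also have "\<dots> \<le> L / t * (3 * sqrt 2 + 4)"
    using add_four_div_le[OF tw] t L by (intro mult_left_mono) auto
  finally have D2: "(\<Lambda> + 2 * L / (t * \<Lambda>))\<^sup>2 \<le> L / t * (3 * sqrt 2 + 4)" .
  have "(2 * \<delta>)\<^sup>2 = 4 * (1 + \<eta>)\<^sup>2 * (\<Lambda> + 2 * L / (t * \<Lambda>))\<^sup>2"
    by (simp add: \<delta>_def power_mult_distrib)
  also have "\<dots> \<le> 4 * (1 + \<eta>)\<^sup>2 * (L / t * (3 * sqrt 2 + 4))"
    using D2 by (intro mult_left_mono) auto
  also have "\<dots> = 4 * (1 + \<eta>)\<^sup>2 * (4 + 3 * sqrt 2) * L / t" by (simp add: field_simps)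
  finally show ?thesis .
qed

lemma stitch_index_bounds:
  assumes "1 \<le> t"
  shows "2 ^ stitch_index t \<le> t" and "t < 2 ^ (stitch_index t + 1)"
proof -
  have "\<exists>!j. 2 ^ j \<le> t \<and> t < 2 ^ (j + 1)"
  proof (rule ex_ex1I)
    show "\<exists>j. 2 ^ j \<le> t \<and> t < 2 ^ (j + 1)" using ex_power_ivl1[of 2 t] assms by auto
  next
    fix j k :: nat
    assume "2 ^ j \<le> t \<and> t < 2 ^ (j + 1)" "2 ^ k \<le> t \<and> t < 2 ^ (k + 1)"
    then have jk: "(2::nat) ^ j < 2 ^ (k + 1)" "(2::nat) ^ k < 2 ^ (j + 1)" by linarith+
    have "j < k + 1" "k < j + 1"
      using power_less_imp_less_exp[OF _ jk(1)] power_less_imp_less_exp[OF _ jk(2)] by simp_all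
    then show "j = k" by simp
  qed
  from theI'[OF this] show "2 ^ stitch_index t \<le> t" "t < 2 ^ (stitch_index t + 1)"
    unfolding stitch_index_def by auto
qed

lemma stitch_scale_bounds:
  assumes "1 \<le> t"
  shows "sqrt 2 \<le> real t * 2 powr (1 / 2 - real (stitch_index t))"
    and "real t * 2 powr (1 / 2 - real (stitch_index t)) \<le> 2 * sqrt 2"
proof -
  define j where "j = stitch_index t"
  have scale: "real t * 2 powr (1 / 2 - real j) = sqrt 2 * (real t / 2 ^ j)"
    by (simp add: powr_diff powr_half_sqrt powr_realpow)
  have "real (2 ^ j) \<le> real t" "real t \<le> real (2 * 2 ^ j)"
    using stitch_index_bounds[OF assms] unfolding j_def[symmetric] of_nat_le_iff by simp_all
  then have "(2::real) ^ j \<le> real t" "real t \<le> 2 * 2 ^ j" by simp_all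
  then have "1 \<le> real t / 2 ^ j" "real t / 2 ^ j \<le> 2" by (simp_all add: field_simps)
  then have "sqrt 2 * 1 \<le> sqrt 2 * (real t / 2 ^ j)" "sqrt 2 * (real t / 2 ^ j) \<le> sqrt 2 * 2"
    by (intro mult_left_mono; simp)+
  then show "sqrt 2 \<le> real t * 2 powr (1 / 2 - real (stitch_index t))"
    and "real t * 2 powr (1 / 2 - real (stitch_index t)) \<le> 2 * sqrt 2"
    unfolding j_def[symmetric] scale by simp_all
qed

lemma ln_Suc_stitch_index_le:
  assumes "1 \<le> t"
  shows "ln (real (stitch_index t) + 1) \<le> 1 + ln (ln (2 * real t))"
proof -
  define j where "j = stitch_index t"
  have l2t: "0 < ln (2 * real t)" using assms by simp
  have "ln 2 \<ge> (1 / 2 :: real)" using ln_le_minus_one[of "1 / 2 :: real"] by (simp add: ln_div)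
  then have "real j + 1 \<le> 2 * ((real j + 1) * ln 2)" by (simp add: mult_left_mono)
  also have "(real j + 1) * ln 2 = ln (real (2 * 2 ^ j))"
    using ln_realpow[of "2::real" "j + 1"] by simp
  also have "\<dots> \<le> ln (2 * real t)"
  proof -
    have "real (2 * 2 ^ j) \<le> real (2 * t)"
      unfolding of_nat_le_iff using stitch_index_bounds(1)[OF assms] by (simp add: j_def)
    then show ?thesis using assms by (subst ln_le_cancel_iff) simp_all
  qed
  finally have "ln (real j + 1) \<le> ln (2 * ln (2 * real t))" using l2t by simp
  also have "\<dots> = ln 2 + ln (ln (2 * real t))" using l2t by (simp add: ln_mult)
  finally show ?thesis using ln_2_less_1 by (simp add: j_def)
qed

lemma alpha_j_pos: "0 < \<alpha> \<Longrightarrow> 0 < alpha_j \<alpha> j"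
  using zeta14_gt_3 by (simp add: alpha_j_def)

lemma alpha_j_le: "0 < \<alpha> \<Longrightarrow> alpha_j \<alpha> j \<le> \<alpha> / zeta14"
  using zeta14_gt_3 by (simp add: alpha_j_def divide_le_eq field_simps ge_one_powr_ge_zero)

lemma ln_two_div_alpha_j:
  assumes "0 < \<alpha>"
  shows "ln (2 / alpha_j \<alpha> j) = ln (2 * zeta14) + 1.4 * ln (real j + 1) + ln (1 / \<alpha>)"
proof -
  have "2 / alpha_j \<alpha> j = (2 * zeta14) * (real j + 1) powr 1.4 * (1 / \<alpha>)"
    by (simp add: alpha_j_def)
  then have "ln (2 / alpha_j \<alpha> j) = ln (2 * zeta14) + ln ((real j + 1) powr 1.4) + ln (1 / \<alpha>)"
    using assms zeta14_gt_3 by (simp only: ln_mult) simp_all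
  then show ?thesis by simp
qed

lemma ln_two_mul_zeta14_le: "ln (2 * zeta14) \<le> 3"
proof -
  have "ln (2 * zeta14) \<le> ln (2 ^ 3)" using zeta14_le zeta14_gt_3 by simp
  also have "\<dots> = 3 * ln 2" using ln_realpow[of "2::real" 3] by simp
  finally show ?thesis using ln_2_less_1 by simp
qed

lemma ln_two_div_alpha_j_stitch_le:
  assumes "0 < \<alpha>" "1 \<le> t"
  shows "ln (2 / alpha_j \<alpha> (stitch_index t)) \<le> 4.4 + 1.4 * ln (ln (2 * real t)) + ln (1 / \<alpha>)"
  using ln_two_div_alpha_j[OF assms(1)] ln_two_mul_zeta14_le ln_Suc_stitch_index_le[OF assms(2)]
  by simp

lemma ln_two_div_alpha_j_pos:
  assumes "0 < \<alpha>" "\<alpha> < 1"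
  shows "0 < ln (2 / alpha_j \<alpha> j)"
proof -
  have "0 < ln (2 * zeta14)" "0 \<le> ln (real j + 1)" "0 < ln (1 / \<alpha>)"
    using zeta14_gt_3 assms by simp_all
  then show ?thesis using ln_two_div_alpha_j[OF assms(1), of j] by linarith
qed

lemma Lambda_j_pos: "0 < \<alpha> \<Longrightarrow> \<alpha> < 1 \<Longrightarrow> 0 < Lambda_j \<alpha> j"
  using ln_two_div_alpha_j_pos by (simp add: Lambda_j_def)

lemma sqrt_two_le: "sqrt 2 \<le> (1.4143 :: real)"
  by (rule real_le_lsqrt) (auto simp: power2_eq_square)

lemma ln_ln_ge_of_exp_exp_le:
  fixes a t :: real
  assumes "exp (exp a) \<le> t"
  shows "a \<le> ln (ln (2 * t))"
proof -
  have t: "0 < t" using assms exp_gt_zero[of "exp a"] by linarith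
  have "exp a \<le> ln t" using assms t by (metis exp_le_cancel_iff exp_ln)
  also have "\<dots> \<le> ln (2 * t)" using t by simp
  finally have "exp a \<le> ln (2 * t)" .
  then have "ln (exp a) \<le> ln (ln (2 * t))"
    using exp_gt_zero[of a] by (subst ln_le_cancel_iff) linarith+
  then show ?thesis by simp
qed

lemma ln_ln_le_sqrt:
  fixes t :: real
  assumes "1 \<le> t"
  shows "ln (ln (2 * t)) \<le> 3 * sqrt t"
proof -
  have "ln (ln (2 * t)) \<le> ln (2 * t) - 1" using assms by (intro ln_le_minus_one) simp
  moreover have "ln (2 * t) = 2 * ln (sqrt (2 * t))" using assms by (simp add: ln_sqrt)
  moreover have "ln (sqrt (2 * t)) \<le> sqrt (2 * t) - 1" using assms by (intro ln_le_minus_one) simp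
  moreover have "sqrt (2 * t) = sqrt 2 * sqrt t" by (simp add: real_sqrt_mult)
  moreover have "sqrt 2 * sqrt t \<le> 3 / 2 * sqrt t"
    using sqrt_two_le assms by (intro mult_right_mono) auto
  ultimately show ?thesis by linarith
qed

lemma half_ge_ln_ln:
  fixes t :: real
  assumes "10 ^ 12 \<le> t"
  shows "132000 + 42000 * ln (ln (2 * t)) \<le> t / 2"
proof -
  have "10 ^ 6 \<le> sqrt t" using assms by (intro real_le_rsqrt) (simp add: power2_eq_square)
  then have "10 ^ 6 * sqrt t \<le> sqrt t * sqrt t" using assms by (intro mult_right_mono) auto
  then have "10 ^ 6 * sqrt t \<le> t" using assms by simp
  with \<open>10 ^ 6 \<le> sqrt t\<close> ln_ln_le_sqrt[of t] assms show ?thesis by simp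
qed

text \<open>Since \<open>6.8\<^sup>2 = 46.24\<close> exceeds \<open>1.4 \<cdot> 32.99\<close> only slightly, the additive constant is
  absorbed only once the iterated logarithm is a few thousand; this is where the doubly
  exponential threshold on \<open>t\<close> comes from.\<close>
lemma twice_le_sqrt_of_square_le:
  fixes \<delta> t L LL x y :: real
  assumes sq: "(2 * \<delta>)\<^sup>2 \<le> 4 * (1 + 1 / 10000)\<^sup>2 * (4 + 3 * sqrt 2) * L / t"
    and t: "0 < t" and L: "0 < L" and L_le: "L \<le> 4.4 + 1.4 * LL + x"
    and LL: "3000 \<le> LL" and x: "0 \<le> x" "x \<le> y"
  shows "2 * \<delta> \<le> 6.8 * sqrt ((LL + 0.72 * y) / t)"
proof -
  have "4 * (1 + 1 / 10000)\<^sup>2 * (4 + 3 * sqrt 2) * L \<le> 32.99 * L"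
    using sqrt_two_le L by (intro mult_right_mono) (auto simp: power2_eq_square)
  also have "\<dots> \<le> 46.24 * (LL + 0.72 * y)" using L_le LL x by simp
  finally have "(2 * \<delta>)\<^sup>2 \<le> 46.24 * (LL + 0.72 * y) / t"
    using sq t by (smt (verit) divide_right_mono)
  then have "2 * \<delta> \<le> sqrt (46.24 * ((LL + 0.72 * y) / t))" by (intro real_le_rsqrt) simp
  also have "\<dots> = sqrt 46.24 * sqrt ((LL + 0.72 * y) / t)" by (rule real_sqrt_mult)
  also have "sqrt (46.24 :: real) = 6.8" by (rule real_sqrt_unique) (simp_all add: power2_eq_square)
  finally show ?thesis .
qed

lemma stitched_radius:
  fixes \<alpha> :: real and t :: nat
  assumes \<alpha>: "0 < \<alpha>" "\<alpha> < 1"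
    and t: "exp (exp 3000) + 10 ^ 12 + 60000 * ln (1 / \<alpha>) < real t"
  defines "j \<equiv> stitch_index t"
  obtains \<delta> where "0 \<le> \<delta>"
    and "real t * ln (catoni_factor (Lambda_j \<alpha> j) (- \<delta>)) + 2 * ln (2 / alpha_j \<alpha> j)
           + real t * (Lambda_j \<alpha> j)\<^sup>2 / 2 \<le> 0"
    and "2 * \<delta> \<le> 6.8 * sqrt ((ln (ln (2 * real t)) + 0.72 * ln (10.4 / \<alpha>)) / real t)"
proof -
  define x where "x = ln (1 / \<alpha>)"
  define L where "L = ln (2 / alpha_j \<alpha> j)"
  define LL where "LL = ln (ln (2 * real t))"
  define w where "w = 2 powr (1 / 2 - real j)"
  define \<eta> :: real where "\<eta> = 1 / 10000"
  define \<Lambda> where "\<Lambda> = Lambda_j \<alpha> j"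
  define \<delta> where "\<delta> = (1 + \<eta>) * (\<Lambda> + 2 * L / (real t * \<Lambda>))"
  have x: "0 < x" using \<alpha> by (simp add: x_def)
  have "exp (exp 3000) + 10 ^ 12 + 60000 * x < real t" using t by (simp add: x_def)
  then have t_ge: "exp (exp 3000) \<le> real t" "10 ^ 12 \<le> real t" "60000 * x \<le> real t"
    using x exp_gt_zero[of "exp 3000"] zero_less_power[of "10::real" 12] by linarith+
  then have t_pos: "1 \<le> t" by simp
  have L_pos: "0 < L" using ln_two_div_alpha_j_pos[OF \<alpha>] by (simp add: L_def)
  have L_le: "L \<le> 4.4 + 1.4 * LL + x"
    using ln_two_div_alpha_j_stitch_le[OF \<alpha>(1) t_pos] by (simp add: L_def LL_def x_def j_def)
  have LL: "3000 \<le> LL" unfolding LL_def using t_ge(1) by (rule ln_ln_ge_of_exp_exp_le)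
  have w: "0 < w" "sqrt 2 \<le> real t * w" "real t * w \<le> 2 * sqrt 2"
    using stitch_scale_bounds[OF t_pos] by (simp_all add: w_def j_def)
  have \<Lambda>: "\<Lambda> = sqrt (L * w)" by (simp add: \<Lambda>_def Lambda_j_def L_def w_def)
  have "real t * \<Lambda>\<^sup>2 = L * (real t * w)" using L_pos w by (simp add: \<Lambda>)
  also have "\<dots> \<le> L * 3"
    using w(3) sqrt_two_le L_pos by (intro mult_left_mono) auto
  finally have t\<Lambda>: "real t * \<Lambda>\<^sup>2 \<le> 3 * L" by simp
  have "3 * L \<le> \<eta> * real t"
    using half_ge_ln_ln[OF t_ge(2)] L_le t_ge(3) by (simp add: \<eta>_def LL_def)
  then have "real t * ln (catoni_factor \<Lambda> (- \<delta>)) + 2 * L + real t * \<Lambda>\<^sup>2 / 2 \<le> 0"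
    using t_pos L_pos w t\<Lambda> unfolding \<delta>_def
    by (intro catoni_exponent_nonpos) (simp_all add: \<eta>_def \<Lambda>)
  moreover have "2 * \<delta> \<le> 6.8 * sqrt ((LL + 0.72 * ln (10.4 / \<alpha>)) / real t)"
  proof (rule twice_le_sqrt_of_square_le[OF _ _ L_pos L_le LL])
    have "(2 * \<delta>)\<^sup>2 \<le> 4 * (1 + \<eta>)\<^sup>2 * (4 + 3 * sqrt 2) * L / real t"
      using catoni_radius_sq_le[of "real t" L w \<eta>] t_pos L_pos w by (simp add: \<delta>_def \<Lambda>)
    then show "(2 * \<delta>)\<^sup>2 \<le> 4 * (1 + 1 / 10000)\<^sup>2 * (4 + 3 * sqrt 2) * L / real t"
      unfolding \<eta>_def .
    show "x \<le> ln (10.4 / \<alpha>)" using \<alpha> unfolding x_def by (intro ln_mono) (simp_all add: field_simps)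
  qed (use t_pos x in simp_all)
  moreover have "0 \<le> \<delta>" using t_pos L_pos w by (simp add: \<delta>_def \<Lambda> \<eta>_def)
  ultimately show ?thesis using that by (simp add: \<Lambda>_def L_def LL_def)
qed

lemma (in cond_mean_var_process) prob_width_CI_stitch_ge:
  assumes \<phi>: "catoni_type \<phi>" and \<alpha>: "0 < \<alpha>" "\<alpha> < 1"
    and t: "exp (exp 3000) + 10 ^ 12 + 60000 * ln (1 / \<alpha>) < real t"
  shows "1 - \<alpha> / zeta14 \<le> prob {\<omega> \<in> space M. width (CI_stitch (\<lambda>i. X i \<omega>) \<phi> \<alpha> t)
           \<le> ereal (6.8 * sqrt ((ln (ln (2 * real t)) + 0.72 * ln (10.4 / \<alpha>)) / real t))}"
proof -
  define j where "j = stitch_index t"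
  obtain \<delta> where "0 \<le> \<delta>"
    and exponent: "real t * ln (catoni_factor (Lambda_j \<alpha> j) (- \<delta>))
           + 2 * ln (2 / alpha_j \<alpha> j) + real t * (Lambda_j \<alpha> j)\<^sup>2 / 2 \<le> 0"
    and radius: "2 * \<delta> \<le> 6.8 * sqrt ((ln (ln (2 * real t)) + 0.72 * ln (10.4 / \<alpha>)) / real t)"
    using stitched_radius[OF \<alpha> t] unfolding j_def by blast
  have "1 - alpha_j \<alpha> j \<le> prob {\<omega> \<in> space M. width (CI_stitch (\<lambda>i. X i \<omega>) \<phi> \<alpha> t)
           \<le> ereal (6.8 * sqrt ((ln (ln (2 * real t)) + 0.72 * ln (10.4 / \<alpha>)) / real t))}"
    unfolding CI_stitch_def j_def[symmetric]
    using \<open>0 \<le> \<delta>\<close> radius Lambda_j_pos[OF \<alpha>, of j] alpha_j_pos[OF \<alpha>(1), of j]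
    by (intro prob_width_CI_C_le[OF \<phi> _ _ exponent radius]) linarith+
  then show ?thesis using alpha_j_le[OF \<alpha>(1), of j] by linarith
qed

theorem corollary2:
  fixes M :: "'a measure" and F :: "nat \<Rightarrow> 'a measure" and X :: "nat \<Rightarrow> 'a \<Rightarrow> real"
    and \<mu> :: real and \<phi> :: "real \<Rightarrow> real"
  assumes "prob_space M"
    and "\<And>t. subalgebra M (F t)"
    and "filtration (space M) F"
    and "sets (F 0) = {{}, space M}"
    and "\<And>t. t \<ge> 1 \<Longrightarrow> X t \<in> borel_measurable (F t)"
    and "\<And>t. t \<ge> 1 \<Longrightarrow> integrable M (X t)"
    and "\<And>t. t \<ge> 1 \<Longrightarrow> integrable M (\<lambda>\<omega>. (X t \<omega> - \<mu>)\<^sup>2)"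
    and "\<And>t. t \<ge> 1 \<Longrightarrow> AE \<omega> in M. real_cond_exp M (F (t - 1)) (X t) \<omega> = \<mu>"
    and "\<And>t. t \<ge> 1 \<Longrightarrow> AE \<omega> in M. real_cond_exp M (F (t - 1)) (\<lambda>\<omega>. (X t \<omega> - \<mu>)\<^sup>2) \<omega> \<le> 1"
    and "catoni_type \<phi>"
  shows "\<exists>q :: real poly. \<forall>\<alpha> (t::nat). 0 < \<alpha> \<and> \<alpha> < 1 \<and> t \<ge> 1 \<and> real t > poly q (ln (1 / \<alpha>)) \<longrightarrow>
           measure M {\<omega> \<in> space M.
              width (CI_stitch (\<lambda>i. X i \<omega>) \<phi> \<alpha> t)
                \<le> ereal (6.8 * sqrt ((ln (ln (2 * real t)) + 0.72 * ln (10.4 / \<alpha>)) / real t))}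
             \<ge> 1 - \<alpha> / zeta14
           \<and> 1 - \<alpha> / zeta14 > 1 - \<alpha> / 3"
proof (intro exI[of _ "[:exp (exp 3000) + 10 ^ 12, 60000:]"] allI impI conjI)
  interpret cond_mean_var_process M F X \<mu>
    using assms(1-3,5-9) by (simp add: cond_mean_var_process_def cond_mean_var_process_axioms_def)
  fix \<alpha> :: real and t :: nat
  assume "0 < \<alpha> \<and> \<alpha> < 1 \<and> t \<ge> 1 \<and> real t > poly [:exp (exp 3000) + 10 ^ 12, 60000:] (ln (1 / \<alpha>))"
  then have \<alpha>: "0 < \<alpha>" "\<alpha> < 1" and "exp (exp 3000) + 10 ^ 12 + 60000 * ln (1 / \<alpha>) < real t"
    by (simp_all add: algebra_simps)
  then show "measure M {\<omega> \<in> space M. width (CI_stitch (\<lambda>i. X i \<omega>) \<phi> \<alpha> t)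
      \<le> ereal (6.8 * sqrt ((ln (ln (2 * real t)) + 0.72 * ln (10.4 / \<alpha>)) / real t))}
    \<ge> 1 - \<alpha> / zeta14"
    using assms(10) by (intro prob_width_CI_stitch_ge)
  show "1 - \<alpha> / zeta14 > 1 - \<alpha> / 3"
    using divide_strict_left_mono[OF zeta14_gt_3 \<alpha>(1)] zeta14_gt_3 by simp
qed

end
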